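(* Let $R$ be a Krull domain. (1) If the divisor class group $\operatorname{Cl}(R)$ is torsion, then $R$ is globally perinormal. (2) If $\dim R = 1$ and $R$ is globally perinormal, then $\operatorname{Cl}(R)$ is torsion.
   Context: All rings are commutative with identity; an overring of a domain $R$ is a ring between $R$ and its fraction field. A ring extension $A \subseteq B$ satisfies going-down if whenever $\mathfrak{p} \subset \mathfrak{q}$ are primes of $A$ and $Q$ is a prime of $B$ with $Q \cap A = \mathfrak{q}$, there is a prime $P \subseteq Q$ of $B$ with $P \cap A = \mathfrak{p}$. A domain $R$ is globally perinormal if every overring $S$ of $R$ such that $R \subseteq S$ satisfies going-down is a localization $R_W$ of $R$ at some multiplicative set $W$. A Krull domain is a domain $R$ with $R = \bigcap R_{\mathfrak{p}}$ over height one primes $\mathfrak{p}$, each nonzero element lying in only finitely many height one primes, and each $R_{\mathfrak{p}}$ ($\mathfrak{p}$ height one) a DVR; $\operatorname{Cl}(R)$ is its divisor class group. *)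

theory Defs
  imports Main "HOL-Computational_Algebra.Fraction_Field"
begin

text \<open>All rings considered are subrings of a fixed field K (a type of class field).
 A domain R is represented as the subring of its fraction field
 K = 'a fract given by the image of the embedding a \<mapsto> Fract a 1.\<close>

definition subring :: "'b::field set \<Rightarrow> bool" where
  "subring S \<longleftrightarrow> 0 \<in> S \<and> 1 \<in> S \<and>
     (\<forall>x\<in>S. \<forall>y\<in>S. x + y \<in> S \<and> x - y \<in> S \<and> x * y \<in> S)"

definition ideal_in :: "'b::field set \<Rightarrow> 'b set \<Rightarrow> bool" where
  "ideal_in S I \<longleftrightarrow> I \<subseteq> S \<and> 0 \<in> I \<and>
     (\<forall>x\<in>I. \<forall>y\<in>I. x + y \<in> I) \<and> (\<forall>s\<in>S. \<forall>x\<in>I. s * x \<in> I)"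

definition prime_ideal_in :: "'b::field set \<Rightarrow> 'b set \<Rightarrow> bool" where
  "prime_ideal_in S P \<longleftrightarrow> ideal_in S P \<and> P \<noteq> S \<and>
     (\<forall>x\<in>S. \<forall>y\<in>S. x * y \<in> P \<longrightarrow> x \<in> P \<or> y \<in> P)"

definition principal_ideal :: "'b::field set \<Rightarrow> 'b \<Rightarrow> 'b set" where
  "principal_ideal S t = {s * t | s. s \<in> S}"

definition height_one_prime :: "'b::field set \<Rightarrow> 'b set \<Rightarrow> bool" where
  "height_one_prime S P \<longleftrightarrow> prime_ideal_in S P \<and> P \<noteq> {0} \<and>
     \<not> (\<exists>Q. prime_ideal_in S Q \<and> Q \<noteq> {0} \<and> Q \<subset> P)"

definition mult_set :: "'b::field set \<Rightarrow> 'b set \<Rightarrow> bool" where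
  "mult_set S W \<longleftrightarrow> W \<subseteq> S \<and> 1 \<in> W \<and> 0 \<notin> W \<and> (\<forall>x\<in>W. \<forall>y\<in>W. x * y \<in> W)"

definition localization :: "'b::field set \<Rightarrow> 'b set \<Rightarrow> 'b set" where
  "localization S W = {a * inverse w | a w. a \<in> S \<and> w \<in> W}"

definition dvr :: "'b::field set \<Rightarrow> bool" where
  "dvr V \<longleftrightarrow> subring V \<and>
     (\<forall>I. ideal_in V I \<longrightarrow> (\<exists>t\<in>V. I = principal_ideal V t)) \<and>
     (\<exists>!P. prime_ideal_in V P \<and> P \<noteq> {0})"

definition units_in :: "'b::field set \<Rightarrow> 'b set" where
  "units_in V = {u. u \<in> V \<and> u \<noteq> 0 \<and> inverse u \<in> V}"

definition dvr_val :: "'b::field set \<Rightarrow> 'b \<Rightarrow> int" where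
  "dvr_val V x = (THE n. \<exists>t u. t \<in> V \<and> t \<noteq> 0 \<and> prime_ideal_in V (principal_ideal V t)
        \<and> u \<in> units_in V \<and> x = u * t powi n)"

definition local_at :: "'b::field set \<Rightarrow> 'b set \<Rightarrow> 'b set" where
  "local_at S P = localization S (S - P)"

text \<open>Krull domain R inside its fraction field (which is all of the type 'b).\<close>
definition krull_domain :: "'b::field set \<Rightarrow> bool" where
  "krull_domain R \<longleftrightarrow> subring R \<and>
     R = (\<Inter>P\<in>{P. height_one_prime R P}. local_at R P) \<and>
     (\<forall>x\<in>R. x \<noteq> 0 \<longrightarrow> finite {P. height_one_prime R P \<and> x \<in> P}) \<and>
     (\<forall>P. height_one_prime R P \<longrightarrow> dvr (local_at R P))"

definition divisors :: "'b::field set \<Rightarrow> ('b set \<Rightarrow> int) set" where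
  "divisors R = {D. finite {P. D P \<noteq> 0} \<and> (\<forall>P. D P \<noteq> 0 \<longrightarrow> height_one_prime R P)}"

definition principal_divisor :: "'b::field set \<Rightarrow> 'b \<Rightarrow> 'b set \<Rightarrow> int" where
  "principal_divisor R x = (\<lambda>P. if height_one_prime R P then dvr_val (local_at R P) x else 0)"

definition principal_divisors :: "'b::field set \<Rightarrow> ('b set \<Rightarrow> int) set" where
  "principal_divisors R = {principal_divisor R x | x. x \<noteq> 0}"

text \<open>Cl(R) = Div(R)/Prin(R) is torsion: every class has finite order, i.e. every
  divisor has a positive multiple which is principal.\<close>
definition class_group_torsion :: "'b::field set \<Rightarrow> bool" where
  "class_group_torsion R \<longleftrightarrow>
     (\<forall>D\<in>divisors R. \<exists>n::int. n > 0 \<and> (\<lambda>P. n * D P) \<in> principal_divisors R)"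

definition overring :: "'b::field set \<Rightarrow> 'b set \<Rightarrow> bool" where
  "overring R S \<longleftrightarrow> subring S \<and> R \<subseteq> S"

definition going_down :: "'b::field set \<Rightarrow> 'b set \<Rightarrow> bool" where
  "going_down A B \<longleftrightarrow> (\<forall>p q Q. prime_ideal_in A p \<and> prime_ideal_in A q \<and> p \<subset> q \<and>
      prime_ideal_in B Q \<and> Q \<inter> A = q \<longrightarrow>
      (\<exists>P. prime_ideal_in B P \<and> P \<subseteq> Q \<and> P \<inter> A = p))"

definition globally_perinormal :: "'b::field set \<Rightarrow> bool" where
  "globally_perinormal R \<longleftrightarrow>
     (\<forall>S. overring R S \<and> going_down R S \<longrightarrow> (\<exists>W. mult_set R W \<and> S = localization R W))"

definition krull_dim_one :: "'b::field set \<Rightarrow> bool" where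
  "krull_dim_one R \<longleftrightarrow>
     (\<exists>P0 P1. prime_ideal_in R P0 \<and> prime_ideal_in R P1 \<and> P0 \<subset> P1) \<and>
     \<not> (\<exists>P0 P1 P2. prime_ideal_in R P0 \<and> prime_ideal_in R P1 \<and> prime_ideal_in R P2
          \<and> P0 \<subset> P1 \<and> P1 \<subset> P2)"

definition dom_in_frac :: "('a::idom) fract set" where
  "dom_in_frac = range (\<lambda>a. Fract a 1)"

end

theory Submission
  imports Defs
begin

text \<open>
  If Cl(R) is torsion, every height one prime P has a multiple n P = div x with x \<in> R. For an
  overring S with going down and s \<in> S, such an x is invertible in S: otherwise a prime of S
  containing x contracts to a prime containing P, and going down yields a prime of S lying over P,
  forcing S \<subseteq> R_P. Multiplying s by powers of such x for the finitely many P with s \<notin> R_P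
  lands in R, so S is the localization of R at the elements of R that are invertible in S.

  If dim R = 1, going down holds for every overring, in particular for the intersection S of all
  R_Q with Q \<noteq> P, which is therefore a localization R_W. An element of S with a pole at P has a
  denominator w \<in> W; w is a unit at every Q \<noteq> P, so div w is a positive multiple of P, and every
  divisor is a combination of such P.
\<close>

section \<open>Subrings and ideals of a field\<close>

lemma subringD:
  assumes "subring S"
  shows "0 \<in> S" "1 \<in> S" "x \<in> S \<Longrightarrow> y \<in> S \<Longrightarrow> x + y \<in> S"
    "x \<in> S \<Longrightarrow> y \<in> S \<Longrightarrow> x - y \<in> S" "x \<in> S \<Longrightarrow> y \<in> S \<Longrightarrow> x * y \<in> S"
  using assms unfolding subring_def by auto

lemma subring_power: "subring S \<Longrightarrow> x \<in> S \<Longrightarrow> x ^ n \<in> S"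
  by (induction n) (auto intro: subringD)

lemma subring_INT:
  assumes "\<And>i. i \<in> I \<Longrightarrow> subring (S i)"
  shows "subring (\<Inter>i\<in>I. S i)"
  using assms unfolding subring_def by blast

definition has_fraction_field :: "'b::field set \<Rightarrow> bool" where
  "has_fraction_field S \<longleftrightarrow> (\<forall>z. \<exists>a\<in>S. \<exists>b\<in>S. b \<noteq> 0 \<and> z = a * inverse b)"

lemma has_fraction_field_mono:
  "has_fraction_field R \<Longrightarrow> R \<subseteq> S \<Longrightarrow> has_fraction_field S"
  unfolding has_fraction_field_def by blast

lemma has_fraction_field_dom_in_frac: "has_fraction_field (dom_in_frac :: 'a::idom fract set)"
  unfolding has_fraction_field_def
proof
  fix z :: "'a fract"
  show "\<exists>a\<in>dom_in_frac. \<exists>b\<in>dom_in_frac. b \<noteq> 0 \<and> z = a * inverse b"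
  proof (cases z)
    case (Fract a b)
    have "z = Fract a 1 * inverse (Fract b 1)" "Fract b 1 \<noteq> 0"
      using Fract by (simp_all add: Zero_fract_def eq_fract)
    then show ?thesis unfolding dom_in_frac_def by blast
  qed
qed

lemma idealD:
  assumes "ideal_in S I"
  shows "I \<subseteq> S" "0 \<in> I" "x \<in> I \<Longrightarrow> y \<in> I \<Longrightarrow> x + y \<in> I"
    "s \<in> S \<Longrightarrow> x \<in> I \<Longrightarrow> s * x \<in> I"
  using assms unfolding ideal_in_def by auto

lemma ideal_principal_ideal:
  assumes S: "subring S" and x: "x \<in> S"
  shows "ideal_in S (principal_ideal S x)"
  unfolding ideal_in_def principal_ideal_def
proof (intro conjI ballI)
  show "{s * x |s. s \<in> S} \<subseteq> S" "0 \<in> {s * x |s. s \<in> S}"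
    using S x subringD(1)[OF S] by (force intro: subringD)+
  fix a b assume "a \<in> {s * x |s. s \<in> S}" "b \<in> {s * x |s. s \<in> S}"
  then obtain s1 s2 where "s1 \<in> S" "s2 \<in> S" "a = s1 * x" "b = s2 * x" by auto
  then show "a + b \<in> {s * x |s. s \<in> S}"
    using S by (auto intro!: exI[of _ "s1 + s2"] subringD simp: distrib_right)
next
  fix a b assume "a \<in> S" "b \<in> {s * x |s. s \<in> S}"
  then obtain s where "s \<in> S" "b = s * x" by auto
  then show "a * b \<in> {s * x |s. s \<in> S}"
    using S \<open>a \<in> S\<close> by (auto intro!: exI[of _ "a * s"] subringD simp: mult.assoc)
qed

lemma mem_principal_ideal_self: "subring S \<Longrightarrow> t \<in> principal_ideal S t"
  using subringD(2) unfolding principal_ideal_def by force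

lemma ideal_add_generator:
  assumes S: "subring S" and M: "ideal_in S M" and a: "a \<in> S"
  shows "ideal_in S {m + a * s | m s. m \<in> M \<and> s \<in> S}"
  unfolding ideal_in_def
proof (intro conjI ballI)
  show "{m + a * s | m s. m \<in> M \<and> s \<in> S} \<subseteq> S"
    using idealD(1)[OF M] a S by (auto intro!: subringD)
  have "0 = 0 + a * 0" by simp
  then show "0 \<in> {m + a * s | m s. m \<in> M \<and> s \<in> S}"
    using idealD(2)[OF M] subringD(1)[OF S] by blast
  fix p q assume "p \<in> {m + a * s | m s. m \<in> M \<and> s \<in> S}" "q \<in> {m + a * s | m s. m \<in> M \<and> s \<in> S}"
  then obtain m1 s1 m2 s2 where "m1 \<in> M" "s1 \<in> S" "m2 \<in> M" "s2 \<in> S"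
    "p = m1 + a * s1" "q = m2 + a * s2" by auto
  then have "p + q = (m1 + m2) + a * (s1 + s2)" "m1 + m2 \<in> M" "s1 + s2 \<in> S"
    using idealD(3)[OF M] subringD(3)[OF S] by (simp_all add: algebra_simps)
  then show "p + q \<in> {m + a * s | m s. m \<in> M \<and> s \<in> S}" by blast
next
  fix r q assume r: "r \<in> S" and "q \<in> {m + a * s | m s. m \<in> M \<and> s \<in> S}"
  then obtain m s where "m \<in> M" "s \<in> S" "q = m + a * s" by auto
  moreover have "r * m \<in> M" "r * s \<in> S"
    using idealD(4)[OF M] subringD(5)[OF S] r \<open>m \<in> M\<close> \<open>s \<in> S\<close> by auto
  moreover have "r * q = r * m + a * (r * s)" using \<open>q = m + a * s\<close> by (simp add: algebra_simps)
  ultimately show "r * q \<in> {m + a * s | m s. m \<in> M \<and> s \<in> S}" by blast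
qed

lemma one_notin_prime_ideal:
  assumes "prime_ideal_in S P" "subring S"
  shows "1 \<notin> P"
proof
  assume "1 \<in> P"
  then have "S \<subseteq> P" using idealD(4)[of S P _ 1] assms unfolding prime_ideal_in_def by auto
  then show False using assms unfolding prime_ideal_in_def ideal_in_def by auto
qed

lemma prime_ideal_multD:
  "prime_ideal_in S P \<Longrightarrow> x \<in> S \<Longrightarrow> y \<in> S \<Longrightarrow> x * y \<in> P \<Longrightarrow> x \<in> P \<or> y \<in> P"
  unfolding prime_ideal_in_def by auto

lemma prime_ideal_powerD:
  assumes P: "prime_ideal_in S P" and S: "subring S" and x: "x \<in> S" "x ^ n \<in> P"
  shows "x \<in> P"
  using x(2)
proof (induction n)
  case 0 then show ?case using one_notin_prime_ideal[OF P S] by simp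
next
  case (Suc n)
  then show ?case using prime_ideal_multD[OF P x(1) subring_power[OF S x(1)]] by auto
qed

lemma prime_ideal_zero: "subring S \<Longrightarrow> prime_ideal_in S {0}"
  unfolding prime_ideal_in_def ideal_in_def using subringD[of S] by auto

lemma prime_ideal_contract:
  assumes R: "subring R" and S: "subring S" "R \<subseteq> S" and Q: "prime_ideal_in S Q"
  shows "prime_ideal_in R (Q \<inter> R)"
proof -
  have "1 \<notin> Q" using one_notin_prime_ideal[OF Q S(1)] .
  then have "Q \<inter> R \<noteq> R" using subringD(2)[OF R] by auto
  moreover have "ideal_in R (Q \<inter> R)"
    using Q S subringD[OF R] unfolding prime_ideal_in_def ideal_in_def by auto
  ultimately show ?thesis using Q S unfolding prime_ideal_in_def by auto
qed

lemma maximal_ideal_prime: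
  assumes S: "subring S" and M: "ideal_in S M" "1 \<notin> M"
    and max: "\<And>J. ideal_in S J \<Longrightarrow> M \<subseteq> J \<Longrightarrow> 1 \<notin> J \<Longrightarrow> J = M"
  shows "prime_ideal_in S M"
  unfolding prime_ideal_in_def
proof (intro conjI ballI impI)
  show "ideal_in S M" "M \<noteq> S" using M subringD(2)[OF S] by auto
  have comaximal: "\<exists>m\<in>M. \<exists>s\<in>S. 1 = m + a * s" if a: "a \<in> S" "a \<notin> M" for a
  proof -
    define J where "J = {m + a * s | m s. m \<in> M \<and> s \<in> S}"
    have "m + a * 0 \<in> J" if "m \<in> M" for m
      unfolding J_def using that subringD(1)[OF S] by blast
    then have MJ: "M \<subseteq> J" by auto
    have "0 + a * 1 \<in> J" unfolding J_def using idealD(2)[OF M(1)] subringD(2)[OF S] by blast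
    then have "J \<noteq> M" using a by auto
    then have "1 \<in> J" using max[OF _ MJ] ideal_add_generator[OF S M(1) a(1)] unfolding J_def by blast
    then show ?thesis unfolding J_def by blast
  qed
  fix a b assume ab: "a \<in> S" "b \<in> S" "a * b \<in> M"
  show "a \<in> M \<or> b \<in> M"
  proof (rule ccontr)
    assume "\<not> (a \<in> M \<or> b \<in> M)"
    with comaximal ab obtain m1 s1 m2 s2 where m: "m1 \<in> M" "s1 \<in> S" "m2 \<in> M" "s2 \<in> S"
      "1 = m1 + a * s1" "1 = m2 + b * s2" by metis
    have MS: "M \<subseteq> S" using idealD(1)[OF M(1)] .
    have "(1::'a) = (m1 + a * s1) * (m2 + b * s2)" using m by simp
    also have "\<dots> = (m2 + b * s2) * m1 + (a * s1) * m2 + (s1 * s2) * (a * b)"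
      by (simp add: algebra_simps)
    also have "\<dots> \<in> M"
    proof -
      have "m2 + b * s2 \<in> S" "a * s1 \<in> S" "s1 * s2 \<in> S"
        using m ab MS subringD(3,5)[OF S] by blast+
      then show ?thesis using m ab idealD(3,4)[OF M(1)] by simp
    qed
    finally show False using M(2) by simp
  qed
qed

lemma exists_prime_ideal_containing:
  assumes S: "subring S" and x: "x \<in> S" and nonunit: "\<not> (\<exists>y\<in>S. x * y = 1)"
  shows "\<exists>Q. prime_ideal_in S Q \<and> x \<in> Q"
proof -
  define A where "A = {I. ideal_in S I \<and> x \<in> I \<and> 1 \<notin> I}"
  have "principal_ideal S x \<in> A"
    using ideal_principal_ideal[OF S x] mem_principal_ideal_self[OF S] nonunit
    unfolding A_def principal_ideal_def by (auto simp: mult.commute)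
  moreover have "\<Union>C \<in> A" if "C \<noteq> {}" "subset.chain A C" for C
  proof -
    have CA: "\<And>I. I \<in> C \<Longrightarrow> ideal_in S I \<and> x \<in> I \<and> 1 \<notin> I"
      and ch: "\<And>X Y. X \<in> C \<Longrightarrow> Y \<in> C \<Longrightarrow> X \<subseteq> Y \<or> Y \<subseteq> X"
      using that(2) unfolding subset_chain_def A_def by auto
    have "a + b \<in> \<Union>C" if ab: "a \<in> \<Union>C" "b \<in> \<Union>C" for a b
    proof -
      obtain X Y where XY: "X \<in> C" "Y \<in> C" "a \<in> X" "b \<in> Y" using ab by blast
      show ?thesis
      proof (cases "X \<subseteq> Y")
        case True
        then show ?thesis using XY idealD(3)[OF conjunct1[OF CA[OF XY(2)]]] by blast
      next
        case False
        then have "Y \<subseteq> X" using ch[OF XY(1,2)] by blast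
        then show ?thesis using XY idealD(3)[OF conjunct1[OF CA[OF XY(1)]]] by blast
      qed
    qed
    moreover have "s * a \<in> \<Union>C" if "s \<in> S" "a \<in> \<Union>C" for s a
      using that idealD(4) CA by blast
    moreover have "\<Union>C \<subseteq> S" "0 \<in> \<Union>C" "x \<in> \<Union>C" "1 \<notin> \<Union>C"
      using CA idealD(1,2) \<open>C \<noteq> {}\<close> by blast+
    ultimately show ?thesis unfolding A_def ideal_in_def by blast
  qed
  ultimately obtain M where M: "M \<in> A" and Mmax: "\<And>X. X \<in> A \<Longrightarrow> M \<subseteq> X \<Longrightarrow> X = M"
    using subset_Zorn_nonempty[of A] by blast
  have "prime_ideal_in S M"
    using M Mmax by (intro maximal_ideal_prime[OF S]) (auto simp: A_def)
  then show ?thesis using M unfolding A_def by auto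
qed

lemma going_down_if_dim_one:
  assumes dim: "krull_dim_one R" and R: "subring R" and S: "subring S"
  shows "going_down R S"
  unfolding going_down_def
proof (intro allI impI)
  fix p q Q assume pq: "prime_ideal_in R p \<and> prime_ideal_in R q \<and> p \<subset> q \<and> prime_ideal_in S Q \<and> Q \<inter> R = q"
  have "p = {0}"
  proof (rule ccontr)
    assume "p \<noteq> {0}"
    then have "{0} \<subset> p" using pq idealD(2) unfolding prime_ideal_in_def by blast
    then show False using dim pq prime_ideal_zero[OF R] unfolding krull_dim_one_def by blast
  qed
  moreover have "0 \<in> Q" using pq idealD(2) unfolding prime_ideal_in_def by blast
  ultimately show "\<exists>P. prime_ideal_in S P \<and> P \<subseteq> Q \<and> P \<inter> R = p"
    using prime_ideal_zero[OF S] subringD(1)[OF R] by (intro exI[of _ "{0}"]) auto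
qed

section \<open>Discrete valuation rings\<close>

locale dvr_of_field =
  fixes V :: "'b::field set"
  assumes dvr: "dvr V" and fraction_field: "has_fraction_field V"
begin

lemma subring: "subring V" using dvr unfolding dvr_def by auto

lemma principal: "ideal_in V I \<Longrightarrow> \<exists>t\<in>V. I = principal_ideal V t"
  using dvr unfolding dvr_def by auto

definition max_ideal :: "'b set" where
  "max_ideal = (THE P. prime_ideal_in V P \<and> P \<noteq> {0})"

lemma ex1_max_ideal: "\<exists>!P. prime_ideal_in V P \<and> P \<noteq> {0}"
  using dvr unfolding dvr_def by auto

lemma max_ideal: "prime_ideal_in V max_ideal" "max_ideal \<noteq> {0}"
  using theI'[OF ex1_max_ideal] unfolding max_ideal_def by auto

lemma max_ideal_unique: "prime_ideal_in V Q \<Longrightarrow> Q \<noteq> {0} \<Longrightarrow> Q = max_ideal"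
  using ex1_max_ideal max_ideal by blast

lemma ideal_max_ideal: "ideal_in V max_ideal"
  using max_ideal unfolding prime_ideal_in_def by auto

lemma nonunit_in_max_ideal:
  assumes x: "x \<in> V" "x \<notin> units_in V"
  shows "x \<in> max_ideal"
proof (cases "x = 0")
  case True then show ?thesis using idealD(2)[OF ideal_max_ideal] by simp
next
  case False
  have "\<not> (\<exists>y\<in>V. x * y = 1)"
    using x False inverse_unique[of x] unfolding units_in_def by auto
  then obtain Q where "prime_ideal_in V Q" "x \<in> Q"
    using exists_prime_ideal_containing[OF subring x(1)] by blast
  then show ?thesis using max_ideal_unique False by blast
qed

lemma units_mult: "u \<in> units_in V \<Longrightarrow> w \<in> units_in V \<Longrightarrow> u * w \<in> units_in V"
  unfolding units_in_def using subringD(5)[OF subring] by (auto simp: inverse_mult_distrib)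

lemma units_inverse: "u \<in> units_in V \<Longrightarrow> inverse u \<in> units_in V"
  unfolding units_in_def by auto

lemma units_one: "1 \<in> units_in V"
  unfolding units_in_def using subringD(2)[OF subring] by auto

lemma units_power: "u \<in> units_in V \<Longrightarrow> u ^ n \<in> units_in V"
  by (induction n) (auto intro: units_mult units_one)

lemma units_power_int: "u \<in> units_in V \<Longrightarrow> u powi n \<in> units_in V"
  by (cases "n \<ge> 0") (auto simp: power_int_def intro: units_power units_inverse)

definition uniformizer :: "'b \<Rightarrow> bool" where
  "uniformizer t \<longleftrightarrow> t \<in> V \<and> t \<noteq> 0 \<and> prime_ideal_in V (principal_ideal V t)"

lemma principal_ideal_uniformizer: "uniformizer t \<Longrightarrow> principal_ideal V t = max_ideal"
  unfolding uniformizer_def using max_ideal_unique mem_principal_ideal_self[OF subring] by blast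

lemma uniformizer_in_max_ideal: "uniformizer t \<Longrightarrow> t \<in> max_ideal"
  using principal_ideal_uniformizer mem_principal_ideal_self[OF subring] by blast

lemma uniformizer_exists: "\<exists>t. uniformizer t"
proof -
  obtain t where t: "t \<in> V" "max_ideal = principal_ideal V t"
    using principal[OF ideal_max_ideal] by auto
  moreover have "t \<noteq> 0" using t max_ideal(2) unfolding principal_ideal_def by auto
  ultimately show ?thesis using max_ideal(1) unfolding uniformizer_def by auto
qed

lemma uniformizer_dvd: "uniformizer t \<Longrightarrow> x \<in> max_ideal \<Longrightarrow> \<exists>r\<in>V. x = r * t"
  using principal_ideal_uniformizer unfolding principal_ideal_def by auto

lemma inverse_uniformizer_notin: "uniformizer t \<Longrightarrow> inverse t \<notin> V"
proof
  assume t: "uniformizer t" "inverse t \<in> V"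
  then have "inverse t * t \<in> max_ideal"
    using principal_ideal_uniformizer unfolding principal_ideal_def by blast
  then show False using t one_notin_prime_ideal[OF max_ideal(1) subring]
    unfolding uniformizer_def by auto
qed

lemma uniformizer_power_not_unit:
  assumes t: "uniformizer t" and k: "k > 0"
  shows "t ^ k \<notin> units_in V"
proof
  assume u: "t ^ k \<in> units_in V"
  have "t ^ k = t * t ^ (k - 1)" using k by (metis Suc_diff_1 power_Suc)
  then have "inverse t = t ^ (k - 1) * inverse (t ^ k)"
    using t unfolding uniformizer_def by (simp add: field_simps)
  moreover have "t ^ (k - 1) \<in> V" using subring_power[OF subring] t unfolding uniformizer_def by auto
  ultimately have "inverse t \<in> V" using u subringD(5)[OF subring] unfolding units_in_def by auto
  then show False using inverse_uniformizer_notin[OF t] by simp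
qed

text \<open>If x/t^n lay in V for all n, the ideal of all z with t^n z \<in> xV for some n would be
  generated by some c; comparing x/t^(N+1) with c exhibits 1/t \<in> V.\<close>
lemma not_divisible_by_all_powers:
  assumes x: "x \<in> V" "x \<noteq> 0" and t: "uniformizer t"
  shows "\<exists>n. x * inverse (t ^ Suc n) \<notin> V"
proof (rule ccontr)
  assume "\<not> ?thesis"
  then have all: "\<And>n. x * inverse (t ^ Suc n) \<in> V" by auto
  have tV: "t \<in> V" "t \<noteq> 0" using t unfolding uniformizer_def by auto
  have xV: "ideal_in V (principal_ideal V x)" using ideal_principal_ideal[OF subring x(1)] .
  define I where "I = {z \<in> V. \<exists>n. t ^ n * z \<in> principal_ideal V x}"
  have "ideal_in V I" unfolding ideal_in_def
  proof (intro conjI ballI)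
    show "I \<subseteq> V" unfolding I_def by auto
    show "0 \<in> I" unfolding I_def using idealD(2)[OF xV] subringD(1)[OF subring] by auto
    fix a b assume "a \<in> I" "b \<in> I"
    then obtain n m where nm: "a \<in> V" "b \<in> V" "t ^ n * a \<in> principal_ideal V x"
      "t ^ m * b \<in> principal_ideal V x" unfolding I_def by auto
    have "t ^ m * (t ^ n * a) + t ^ n * (t ^ m * b) \<in> principal_ideal V x"
      using nm subring_power[OF subring tV(1)] idealD(3,4)[OF xV] by blast
    moreover have "t ^ m * (t ^ n * a) + t ^ n * (t ^ m * b) = t ^ (n + m) * (a + b)"
      by (simp add: algebra_simps power_add)
    ultimately show "a + b \<in> I" unfolding I_def using nm subringD(3)[OF subring] by auto
  next
    fix r a assume r: "r \<in> V" and "a \<in> I"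
    then obtain n where n: "a \<in> V" "t ^ n * a \<in> principal_ideal V x" unfolding I_def by auto
    then have "r * (t ^ n * a) \<in> principal_ideal V x" using idealD(4)[OF xV r] by blast
    then have "t ^ n * (r * a) \<in> principal_ideal V x" by (simp add: algebra_simps)
    then show "r * a \<in> I" unfolding I_def using n r subringD(5)[OF subring] by auto
  qed
  then obtain c where c: "c \<in> V" "I = principal_ideal V c" using principal by auto
  then have "c \<in> I" using mem_principal_ideal_self[OF subring] by auto
  then obtain N r where Nr: "r \<in> V" "t ^ N * c = r * x"
    unfolding I_def principal_ideal_def by auto
  define y where "y = x * inverse (t ^ Suc N)"
  have "t ^ Suc N * y = 1 * x" unfolding y_def using tV by (simp add: field_simps)
  then have "y \<in> I"
    unfolding I_def principal_ideal_def using all[of N] subringD(2)[OF subring] y_def by blast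
  then obtain s where s: "s \<in> V" "y = s * c" using c unfolding principal_ideal_def by auto
  have "x * inverse t = t ^ N * y" unfolding y_def using tV by (simp add: field_simps)
  also have "\<dots> = s * (t ^ N * c)" using s by (simp add: algebra_simps)
  also have "\<dots> = (s * r) * x" using Nr by (simp add: algebra_simps)
  finally have "inverse t = s * r" using x(2) by (metis mult.commute mult_left_cancel)
  then have "inverse t \<in> V" using s Nr subringD(5)[OF subring] by auto
  then show False using inverse_uniformizer_notin[OF t] by simp
qed

lemma factor_uniformizer_power:
  assumes x: "x \<in> V" "x \<noteq> 0" and t: "uniformizer t"
  shows "\<exists>n::nat. \<exists>u\<in>units_in V. x = u * t ^ n"
proof -
  have tz: "t \<noteq> 0" using t unfolding uniformizer_def by auto
  define n where "n = (LEAST n. x * inverse (t ^ Suc n) \<notin> V)"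
  have n1: "x * inverse (t ^ Suc n) \<notin> V"
    unfolding n_def using LeastI_ex[OF not_divisible_by_all_powers[OF x t]] .
  have n2: "x * inverse (t ^ n) \<in> V"
  proof (cases n)
    case 0 then show ?thesis using x by simp
  next
    case (Suc m)
    then have "m < n" by simp
    then have "\<not> (x * inverse (t ^ Suc m) \<notin> V)" unfolding n_def by (rule not_less_Least)
    then show ?thesis using Suc by simp
  qed
  define u where "u = x * inverse (t ^ n)"
  have "u \<in> units_in V"
  proof (rule ccontr)
    assume "u \<notin> units_in V"
    then have "u \<in> max_ideal" using nonunit_in_max_ideal n2 unfolding u_def by blast
    then obtain r where r: "r \<in> V" "u = r * t" using uniformizer_dvd[OF t] by blast
    have "x * inverse (t ^ Suc n) = u * inverse t" unfolding u_def by (simp add: mult.assoc)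
    also have "\<dots> = r" using tz r(2) by simp
    finally have "x * inverse (t ^ Suc n) = r" .
    then show False using n1 r by simp
  qed
  moreover have "x = u * t ^ n" unfolding u_def using tz by simp
  ultimately show ?thesis by blast
qed

lemma factor_uniformizer_power_int:
  assumes x: "x \<noteq> 0" and t: "uniformizer t"
  shows "\<exists>n::int. \<exists>u\<in>units_in V. x = u * t powi n"
proof -
  obtain a b where ab: "a \<in> V" "b \<in> V" "b \<noteq> 0" "x = a * inverse b"
    using fraction_field unfolding has_fraction_field_def by blast
  then have "a \<noteq> 0" using x by auto
  obtain n1 u1 where 1: "u1 \<in> units_in V" "a = u1 * t ^ n1"
    using factor_uniformizer_power[OF ab(1) \<open>a \<noteq> 0\<close> t] by auto
  obtain n2 u2 where 2: "u2 \<in> units_in V" "b = u2 * t ^ n2"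
    using factor_uniformizer_power[OF ab(2,3) t] by auto
  have tz: "t \<noteq> 0" using t unfolding uniformizer_def by auto
  have "x = (u1 * inverse u2) * (t ^ n1 * inverse (t ^ n2))"
    using ab(4) 1(2) 2(2) by (simp add: inverse_mult_distrib mult_ac)
  also have "t ^ n1 * inverse (t ^ n2) = t powi (int n1 - int n2)"
    using tz by (simp add: power_int_diff divide_inverse)
  finally have "x = (u1 * inverse u2) * t powi (int n1 - int n2)" .
  moreover have "u1 * inverse u2 \<in> units_in V" using 1(1) 2(1) units_mult units_inverse by blast
  ultimately show ?thesis by blast
qed

lemma uniformizer_unique_up_to_unit:
  assumes t: "uniformizer t" and t': "uniformizer t'"
  shows "\<exists>e\<in>units_in V. t' = e * t"
proof -
  obtain e where e: "e \<in> V" "t' = e * t"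
    using uniformizer_dvd[OF t uniformizer_in_max_ideal[OF t']] by auto
  obtain f where f: "f \<in> V" "t = f * t'"
    using uniformizer_dvd[OF t' uniformizer_in_max_ideal[OF t]] by auto
  have "t = (e * f) * t" using e f by (simp add: algebra_simps)
  then have "e * f = 1" using t unfolding uniformizer_def by simp
  then have "e \<in> units_in V" using e f inverse_unique[of e f] unfolding units_in_def by auto
  then show ?thesis using e by blast
qed

lemma exponent_unique:
  assumes t: "uniformizer t" and t': "uniformizer t'"
    and u: "u \<in> units_in V" and u': "u' \<in> units_in V"
    and eq: "u * t powi n = u' * t' powi m"
  shows "n = m"
proof -
  obtain e where e: "e \<in> units_in V" "t' = e * t"
    using uniformizer_unique_up_to_unit[OF t t'] by blast
  have tz: "t \<noteq> 0" and uz: "u \<noteq> 0" using t u unfolding uniformizer_def units_in_def by auto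
  have "u * t powi n = u' * e powi m * t powi m"
    using eq e(2) by (simp add: power_int_mult_distrib mult_ac)
  then have "t powi (n - m) = u' * e powi m * inverse u"
    using tz uz by (simp add: power_int_diff field_simps)
  then have U: "t powi (n - m) \<in> units_in V"
    using u u' e units_mult units_inverse units_power_int by auto
  show ?thesis
  proof (rule ccontr)
    assume "n \<noteq> m"
    then consider "n - m > 0" | "m - n > 0" by linarith
    then show False
    proof cases
      case 1
      then have "t ^ nat (n - m) \<in> units_in V" using U by (simp add: power_int_def)
      then show False using uniformizer_power_not_unit[OF t] 1 by simp
    next
      case 2
      then have "inverse (t ^ nat (m - n)) \<in> units_in V"
        using U by (simp add: power_int_def power_inverse)
      then have "t ^ nat (m - n) \<in> units_in V" using units_inverse by fastforce
      then show False using uniformizer_power_not_unit[OF t] 2 by simp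
    qed
  qed
qed

lemma dvr_val_eqI:
  assumes t: "uniformizer t" and u: "u \<in> units_in V" and x: "x = u * t powi n"
  shows "dvr_val V x = n"
  unfolding dvr_val_def
proof (rule the_equality)
  show "\<exists>t u. t \<in> V \<and> t \<noteq> 0 \<and> prime_ideal_in V (principal_ideal V t) \<and> u \<in> units_in V \<and> x = u * t powi n"
    using t u x unfolding uniformizer_def by blast
next
  fix m
  assume "\<exists>t u. t \<in> V \<and> t \<noteq> 0 \<and> prime_ideal_in V (principal_ideal V t) \<and> u \<in> units_in V \<and> x = u * t powi m"
  then obtain t' u' where "uniformizer t'" "u' \<in> units_in V" "x = u' * t' powi m"
    unfolding uniformizer_def by blast
  then show "m = n" using exponent_unique[OF \<open>uniformizer t'\<close> t \<open>u' \<in> _\<close> u] x by simp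
qed

lemma factor_dvr_val:
  assumes "x \<noteq> 0" "uniformizer t"
  shows "\<exists>u\<in>units_in V. x = u * t powi (dvr_val V x)"
  using factor_uniformizer_power_int[OF assms] dvr_val_eqI[OF assms(2)] by metis

lemma dvr_val_mult:
  assumes "x \<noteq> 0" "y \<noteq> 0"
  shows "dvr_val V (x * y) = dvr_val V x + dvr_val V y"
proof -
  obtain t where t: "uniformizer t" using uniformizer_exists by auto
  then have tz: "t \<noteq> 0" unfolding uniformizer_def by auto
  obtain u w where u: "u \<in> units_in V" "x = u * t powi dvr_val V x"
    and w: "w \<in> units_in V" "y = w * t powi dvr_val V y"
    using factor_dvr_val[OF _ t] assms by metis
  have "x * y = (u * w) * t powi (dvr_val V x + dvr_val V y)"
    using tz by (subst u(2), subst w(2)) (simp add: power_int_add mult_ac)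
  then show ?thesis using dvr_val_eqI[OF t units_mult[OF u(1) w(1)]] by blast
qed

lemma dvr_val_power_int:
  assumes "x \<noteq> 0"
  shows "dvr_val V (x powi k) = k * dvr_val V x"
proof -
  obtain t where t: "uniformizer t" using uniformizer_exists by auto
  obtain u where u: "u \<in> units_in V" "x = u * t powi dvr_val V x"
    using factor_dvr_val[OF assms t] by auto
  have "x powi k = u powi k * t powi (k * dvr_val V x)"
    by (subst u(2)) (simp add: power_int_mult_distrib power_int_mult[symmetric] mult.commute)
  then show ?thesis using dvr_val_eqI[OF t units_power_int[OF u(1)]] by blast
qed

lemma dvr_val_power: "x \<noteq> 0 \<Longrightarrow> dvr_val V (x ^ k) = int k * dvr_val V x"
  using dvr_val_power_int[of x "int k"] by simp

lemma dvr_val_inverse: "x \<noteq> 0 \<Longrightarrow> dvr_val V (inverse x) = - dvr_val V x"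
  using dvr_val_power_int[of x "-1"] by (simp add: power_int_minus)

lemma mem_iff_dvr_val_nonneg:
  assumes x: "x \<noteq> 0"
  shows "x \<in> V \<longleftrightarrow> dvr_val V x \<ge> 0"
proof -
  obtain t where t: "uniformizer t" using uniformizer_exists by auto
  show ?thesis
  proof
    assume "x \<in> V"
    then obtain n u where "u \<in> units_in V" "x = u * t ^ n"
      using factor_uniformizer_power[OF _ x t] by auto
    then show "dvr_val V x \<ge> 0" using dvr_val_eqI[OF t, of u x "int n"] by simp
  next
    define n where "n = dvr_val V x"
    assume "dvr_val V x \<ge> 0"
    then have tn: "t powi n = t ^ nat n" unfolding n_def by (simp add: power_int_def)
    obtain u where u: "u \<in> units_in V" "x = u * t powi n"
      using factor_dvr_val[OF x t] unfolding n_def by auto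
    have "u \<in> V" using u(1) unfolding units_in_def by blast
    moreover have "t ^ nat n \<in> V"
      using t subring_power[OF subring] unfolding uniformizer_def by blast
    ultimately have "u * t ^ nat n \<in> V" by (rule subringD(5)[OF subring])
    moreover have "x = u * t ^ nat n" using u(2) tn by (simp only:)
    ultimately show "x \<in> V" by simp
  qed
qed

lemma unit_iff_dvr_val_zero:
  assumes x: "x \<noteq> 0"
  shows "x \<in> units_in V \<longleftrightarrow> dvr_val V x = 0"
proof -
  have "inverse x \<in> V \<longleftrightarrow> - dvr_val V x \<ge> 0"
    using mem_iff_dvr_val_nonneg[of "inverse x"] dvr_val_inverse[OF x] x by simp
  moreover have "x \<in> units_in V \<longleftrightarrow> x \<in> V \<and> inverse x \<in> V"
    using x unfolding units_in_def by blast
  ultimately show ?thesis using mem_iff_dvr_val_nonneg[OF x] by linarith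
qed

lemma inverse_mem_if_not_mem:
  assumes "x \<noteq> 0" "x \<notin> V"
  shows "inverse x \<in> V"
proof -
  have "dvr_val V x < 0" using mem_iff_dvr_val_nonneg assms by force
  then show ?thesis using mem_iff_dvr_val_nonneg[of "inverse x"] dvr_val_inverse assms by simp
qed

end

section \<open>Krull domains and their valuations\<close>

locale krull_domain_of_field =
  fixes R :: "'b::field set"
  assumes krull: "krull_domain R" and fraction_field: "has_fraction_field R"
begin

abbreviation ht1 :: "'b set \<Rightarrow> bool" where "ht1 P \<equiv> height_one_prime R P"
abbreviation loc :: "'b set \<Rightarrow> 'b set" where "loc P \<equiv> local_at R P"
abbreviation v :: "'b set \<Rightarrow> 'b \<Rightarrow> int" where "v P x \<equiv> dvr_val (local_at R P) x"

lemma subring: "subring R" using krull unfolding krull_domain_def by auto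

lemma ht1_prime: "ht1 P \<Longrightarrow> prime_ideal_in R P"
  unfolding height_one_prime_def by auto

lemma ht1_ideal: "ht1 P \<Longrightarrow> ideal_in R P"
  using ht1_prime unfolding prime_ideal_in_def by auto

lemma ht1_subset: "ht1 P \<Longrightarrow> P \<subseteq> R"
  using idealD(1)[OF ht1_ideal] .

lemma ht1_zero: "ht1 P \<Longrightarrow> 0 \<in> P"
  using idealD(2)[OF ht1_ideal] .

lemma ht1_one: "ht1 P \<Longrightarrow> 1 \<notin> P"
  using one_notin_prime_ideal[OF ht1_prime subring] .

lemma ht1_nonzero: "ht1 P \<Longrightarrow> \<exists>a\<in>P. a \<noteq> 0"
  using ht1_zero unfolding height_one_prime_def by blast

lemma ht1_incomparable: "ht1 P \<Longrightarrow> ht1 Q \<Longrightarrow> Q \<subseteq> P \<Longrightarrow> Q = P"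
  unfolding height_one_prime_def by auto

lemma mem_loc_iff: "z \<in> loc P \<longleftrightarrow> (\<exists>a w. a \<in> R \<and> w \<in> R \<and> w \<notin> P \<and> z = a * inverse w)"
  unfolding local_at_def localization_def by auto

lemma subset_loc: "ht1 P \<Longrightarrow> R \<subseteq> loc P"
proof
  fix a assume "ht1 P" "a \<in> R"
  moreover have "a = a * inverse 1" by simp
  ultimately show "a \<in> loc P" unfolding mem_loc_iff using subringD(2)[OF subring] ht1_one by blast
qed

lemma dvr_loc: "ht1 P \<Longrightarrow> dvr (loc P)"
  using krull unfolding krull_domain_def by auto

lemma dvr_of_field_loc: "ht1 P \<Longrightarrow> dvr_of_field (loc P)"
  unfolding dvr_of_field_def using dvr_loc has_fraction_field_mono[OF fraction_field subset_loc]
  by blast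

lemma subring_loc: "ht1 P \<Longrightarrow> subring (loc P)"
  using dvr_of_field.subring[OF dvr_of_field_loc] .

lemma mem_loc_iff_val: "ht1 P \<Longrightarrow> x \<noteq> 0 \<Longrightarrow> x \<in> loc P \<longleftrightarrow> v P x \<ge> 0"
  using dvr_of_field.mem_iff_dvr_val_nonneg[OF dvr_of_field_loc] by blast

lemma val_mult: "ht1 P \<Longrightarrow> x \<noteq> 0 \<Longrightarrow> y \<noteq> 0 \<Longrightarrow> v P (x * y) = v P x + v P y"
  using dvr_of_field.dvr_val_mult[OF dvr_of_field_loc] by blast

lemma val_power: "ht1 P \<Longrightarrow> x \<noteq> 0 \<Longrightarrow> v P (x ^ k) = int k * v P x"
  using dvr_of_field.dvr_val_power[OF dvr_of_field_loc] by blast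

lemma val_power_int: "ht1 P \<Longrightarrow> x \<noteq> 0 \<Longrightarrow> v P (x powi k) = k * v P x"
  using dvr_of_field.dvr_val_power_int[OF dvr_of_field_loc] by blast

lemma val_inverse: "ht1 P \<Longrightarrow> x \<noteq> 0 \<Longrightarrow> v P (inverse x) = - v P x"
  using dvr_of_field.dvr_val_inverse[OF dvr_of_field_loc] by blast

lemma val_one: "ht1 P \<Longrightarrow> v P 1 = 0"
  using dvr_of_field.unit_iff_dvr_val_zero[OF dvr_of_field_loc, of P 1]
    dvr_of_field.units_one[OF dvr_of_field_loc] by simp

lemma inverse_mem_loc: "ht1 P \<Longrightarrow> x \<noteq> 0 \<Longrightarrow> x \<notin> loc P \<Longrightarrow> inverse x \<in> loc P"
  using dvr_of_field.inverse_mem_if_not_mem[OF dvr_of_field_loc] by blast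

lemma val_nonneg: "ht1 P \<Longrightarrow> x \<in> R \<Longrightarrow> x \<noteq> 0 \<Longrightarrow> v P x \<ge> 0"
  using mem_loc_iff_val subset_loc by blast

lemma val_pos:
  assumes P: "ht1 P" and x: "x \<in> P" "x \<noteq> 0"
  shows "v P x \<ge> 1"
proof (rule ccontr)
  assume "\<not> v P x \<ge> 1"
  then have "v P x = 0" using val_nonneg[OF P] ht1_subset[OF P] x by force
  then have "inverse x \<in> loc P"
    using dvr_of_field.unit_iff_dvr_val_zero[OF dvr_of_field_loc[OF P] x(2)]
    unfolding units_in_def by blast
  then obtain a w where aw: "a \<in> R" "w \<in> R" "w \<notin> P" "inverse x = a * inverse w"
    unfolding mem_loc_iff by blast
  have "w \<noteq> 0" using aw ht1_zero[OF P] by auto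
  then have "w = a * x" using aw(4) x(2) by (simp add: field_simps)
  then show False using idealD(4)[OF ht1_ideal[OF P] aw(1) x(1)] aw(3) by simp
qed

lemma val_zero:
  assumes P: "ht1 P" and x: "x \<in> R" "x \<notin> P"
  shows "v P x = 0"
proof -
  have xz: "x \<noteq> 0" using x ht1_zero[OF P] by auto
  have "1 * inverse x \<in> loc P" unfolding mem_loc_iff using x subringD(2)[OF subring] by blast
  then have "x \<in> units_in (loc P)"
    using subset_loc[OF P] x xz unfolding units_in_def by auto
  then show ?thesis using dvr_of_field.unit_iff_dvr_val_zero[OF dvr_of_field_loc[OF P] xz] by simp
qed

lemma eq_INT_loc: "R = (\<Inter>P\<in>{P. ht1 P}. loc P)"
  using krull unfolding krull_domain_def by auto

lemma mem_if_in_all_loc: "(\<And>P. ht1 P \<Longrightarrow> x \<in> loc P) \<Longrightarrow> x \<in> R"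
  by (subst eq_INT_loc) blast

lemma mem_if_val_nonneg: "x \<noteq> 0 \<Longrightarrow> (\<And>P. ht1 P \<Longrightarrow> v P x \<ge> 0) \<Longrightarrow> x \<in> R"
  using mem_if_in_all_loc mem_loc_iff_val by blast

lemma finite_ht1_containing: "x \<in> R \<Longrightarrow> x \<noteq> 0 \<Longrightarrow> finite {P. ht1 P \<and> x \<in> P}"
  using krull unfolding krull_domain_def by auto

lemma finite_ht1_not_in_loc: "finite {P. ht1 P \<and> s \<notin> loc P}"
proof -
  obtain a b where ab: "a \<in> R" "b \<in> R" "b \<noteq> 0" "s = a * inverse b"
    using fraction_field unfolding has_fraction_field_def by blast
  then have "{P. ht1 P \<and> s \<notin> loc P} \<subseteq> {P. ht1 P \<and> b \<in> P}"
    unfolding mem_loc_iff by blast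
  then show ?thesis using finite_subset finite_ht1_containing[OF ab(2,3)] by blast
qed

text \<open>An element s \<notin> R_P has 1/s = a/w with a \<in> P, so w = s a would lie in the prime over P.\<close>
lemma subset_loc_if_lying_over:
  assumes S: "subring S" "R \<subseteq> S" and P: "ht1 P"
    and P': "prime_ideal_in S P'" "P' \<inter> R = P"
  shows "S \<subseteq> loc P"
proof
  fix s assume s: "s \<in> S"
  show "s \<in> loc P"
  proof (rule ccontr)
    assume sP: "s \<notin> loc P"
    then have sz: "s \<noteq> 0" using subset_loc[OF P] subringD(1)[OF subring] by auto
    obtain a w where aw: "a \<in> R" "w \<in> R" "w \<notin> P" "inverse s = a * inverse w"
      using inverse_mem_loc[OF P sz sP] unfolding mem_loc_iff by blast
    have "w \<noteq> 0" using aw ht1_zero[OF P] by auto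
    then have w: "w = s * a" using aw(4) sz by (simp add: field_simps)
    show False
    proof (cases "a \<in> P")
      case False
      then have "a \<noteq> 0" using ht1_zero[OF P] by auto
      then have "s = w * inverse a" using w sz by (simp add: field_simps)
      then show False using sP aw False unfolding mem_loc_iff by blast
    next
      case True
      then have "s * a \<in> P'"
        using idealD(4)[of S P' s a] P' s unfolding prime_ideal_in_def by auto
      then show False using w aw P' by auto
    qed
  qed
qed

end

section \<open>A torsion class group makes R globally perinormal\<close>

definition prime_divisor :: "'b set \<Rightarrow> 'b set \<Rightarrow> int" where
  "prime_divisor P = (\<lambda>Q. if Q = P then 1 else 0)"

lemma prime_divisor_in_divisors: "height_one_prime R P \<Longrightarrow> prime_divisor P \<in> divisors R"
  unfolding divisors_def prime_divisor_def by (auto simp: Collect_conv_if)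

definition inverted_elements :: "'b::field set \<Rightarrow> 'b set \<Rightarrow> 'b set" where
  "inverted_elements R S = {w. w \<in> R \<and> w \<noteq> 0 \<and> inverse w \<in> S}"

lemma mult_set_inverted_elements:
  assumes R: "subring R" and S: "subring S"
  shows "mult_set R (inverted_elements R S)"
  unfolding mult_set_def inverted_elements_def
proof (intro conjI ballI)
  fix a b assume "a \<in> {w. w \<in> R \<and> w \<noteq> 0 \<and> inverse w \<in> S}" "b \<in> {w. w \<in> R \<and> w \<noteq> 0 \<and> inverse w \<in> S}"
  then show "a * b \<in> {w. w \<in> R \<and> w \<noteq> 0 \<and> inverse w \<in> S}"
    using subringD(5)[OF R] subringD(5)[OF S] by (simp add: inverse_mult_distrib)
qed (use subringD(2)[OF R] subringD(2)[OF S] in auto)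

lemma localization_inverted_elements_subset:
  assumes "subring S" "R \<subseteq> S"
  shows "localization R (inverted_elements R S) \<subseteq> S"
proof
  fix z assume "z \<in> localization R (inverted_elements R S)"
  then obtain a w where "a \<in> R" "inverse w \<in> S" "z = a * inverse w"
    unfolding localization_def inverted_elements_def by blast
  then show "z \<in> S" using assms subringD(5)[OF assms(1)] by blast
qed

context krull_domain_of_field
begin

lemma exists_element_supported_at:
  assumes tor: "class_group_torsion R" and P: "ht1 P"
  shows "\<exists>x\<in>R. x \<noteq> 0 \<and> v P x > 0 \<and> (\<forall>Q. ht1 Q \<and> Q \<noteq> P \<longrightarrow> v Q x = 0)"
proof -
  have "\<exists>n>0. (\<lambda>Q. n * prime_divisor P Q) \<in> principal_divisors R"
    using tor prime_divisor_in_divisors[OF P] unfolding class_group_torsion_def by (rule bspec)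
  then obtain n where n: "n > 0" "(\<lambda>Q. n * prime_divisor P Q) \<in> principal_divisors R"
    by blast
  then obtain x where x: "x \<noteq> 0" "principal_divisor R x = (\<lambda>Q. n * prime_divisor P Q)"
    unfolding principal_divisors_def by auto
  have vx: "v Q x = (if Q = P then n else 0)" if "ht1 Q" for Q
    using fun_cong[OF x(2), of Q] that unfolding principal_divisor_def prime_divisor_def by auto
  have "x \<in> R"
  proof (rule mem_if_val_nonneg[OF x(1)])
    fix Q assume "ht1 Q" then show "v Q x \<ge> 0" using vx n(1) by simp
  qed
  moreover have "v P x > 0" using vx[OF P] n(1) by simp
  moreover have "\<forall>Q. ht1 Q \<and> Q \<noteq> P \<longrightarrow> v Q x = 0" using vx by simp
  ultimately show ?thesis using x(1) by blast
qed

text \<open>For y \<in> P and n = v_P(x), the quotient y^n/x lies in R, so y^n \<in> xR \<subseteq> q.\<close>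
lemma subset_prime_containing_element_supported_at:
  assumes P: "ht1 P" and x: "x \<in> R" "x \<noteq> 0" "v P x > 0"
    and supp: "\<And>Q. ht1 Q \<Longrightarrow> Q \<noteq> P \<Longrightarrow> v Q x = 0"
    and q: "prime_ideal_in R q" "x \<in> q"
  shows "P \<subseteq> q"
proof
  fix y assume y: "y \<in> P"
  show "y \<in> q"
  proof (rule ccontr)
    assume yq: "y \<notin> q"
    have yz: "y \<noteq> 0" using yq q idealD(2) unfolding prime_ideal_in_def by blast
    have yR: "y \<in> R" using y ht1_subset[OF P] by auto
    define n where "n = nat (v P x)"
    define z where "z = y ^ n * inverse x"
    have vz: "v Q z = int n * v Q y - v Q x" if "ht1 Q" for Q
      unfolding z_def using val_mult[OF that] val_power[OF that yz] val_inverse[OF that x(2)] yz x(2)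
      by simp
    have "z \<in> R"
    proof (rule mem_if_val_nonneg)
      show "z \<noteq> 0" unfolding z_def using yz x(2) by simp
      fix Q assume Q: "ht1 Q"
      show "v Q z \<ge> 0"
      proof (cases "Q = P")
        case True
        then have "int n * v Q y \<ge> int n"
          using mult_left_mono[OF val_pos[OF P y yz], of "int n"] by simp
        then show ?thesis using vz[OF Q] x(3) True unfolding n_def by simp
      next
        case False
        then show ?thesis using vz[OF Q] supp[OF Q False] val_nonneg[OF Q yR yz] by simp
      qed
    qed
    then have "z * x \<in> q" using q idealD(4)[of R q z x] unfolding prime_ideal_in_def by blast
    moreover have "z * x = y ^ n" unfolding z_def using x(2) by simp
    ultimately show False using prime_ideal_powerD[OF q(1) subring yR] yq by simp
  qed
qed

text \<open>Otherwise some prime of S would contain x; its contraction q contains P, and going down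
  from q to P (or q = P) gives a prime of S over P, contradicting s \<in> S - R_P.\<close>
lemma inverse_mem_if_going_down:
  assumes S: "subring S" "R \<subseteq> S" and gd: "going_down R S"
    and P: "ht1 P" and s: "s \<in> S" "s \<notin> loc P"
    and x: "x \<in> R" "x \<noteq> 0" "v P x > 0"
    and supp: "\<And>Q. ht1 Q \<Longrightarrow> Q \<noteq> P \<Longrightarrow> v Q x = 0"
  shows "inverse x \<in> S"
proof (rule ccontr)
  assume "inverse x \<notin> S"
  then have "\<not> (\<exists>y\<in>S. x * y = 1)" using x(2) inverse_unique[of x] by auto
  then obtain Q where Q: "prime_ideal_in S Q" "x \<in> Q"
    using exists_prime_ideal_containing[OF S(1)] x(1) S(2) by blast
  define q where "q = Q \<inter> R"
  have q: "prime_ideal_in R q" unfolding q_def using prime_ideal_contract[OF subring S Q(1)] .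
  have "P \<subseteq> q"
    using subset_prime_containing_element_supported_at[OF P x supp q] Q(2) x(1) q_def by blast
  have "\<exists>P'. prime_ideal_in S P' \<and> P' \<inter> R = P"
  proof (cases "P = q")
    case True then show ?thesis using Q(1) q_def by blast
  next
    case False
    then have "P \<subset> q" using \<open>P \<subseteq> q\<close> by blast
    then show ?thesis using gd ht1_prime[OF P] q Q(1) unfolding going_down_def q_def by blast
  qed
  then obtain P' where "prime_ideal_in S P'" "P' \<inter> R = P" by blast
  then show False using subset_loc_if_lying_over[OF S P] s by blast
qed

lemma exists_inverted_element_into_loc:
  assumes tor: "class_group_torsion R"
    and S: "subring S" "R \<subseteq> S" and gd: "going_down R S" and s: "s \<in> S"
    and T: "finite T" "T \<subseteq> {P. ht1 P \<and> s \<notin> loc P}"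
  shows "\<exists>w\<in>inverted_elements R S. \<forall>P\<in>T. s * w \<in> loc P"
  using T
proof (induction T rule: finite_induct)
  case empty
  have "1 \<in> inverted_elements R S"
    unfolding inverted_elements_def using subringD(2)[OF subring] subringD(2)[OF S(1)] by auto
  then show ?case by blast
next
  case (insert P T)
  then obtain w where w: "w \<in> inverted_elements R S" "\<forall>Q\<in>T. s * w \<in> loc Q" by auto
  have P: "ht1 P" "s \<notin> loc P" using insert by auto
  obtain x where x: "x \<in> R" "x \<noteq> 0" "v P x > 0"
    and supp: "\<forall>Q. ht1 Q \<and> Q \<noteq> P \<longrightarrow> v Q x = 0"
    using exists_element_supported_at[OF tor P(1)] by blast
  have "inverse x \<in> S" using inverse_mem_if_going_down[OF S gd P(1) s P(2) x] supp by blast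
  have sw: "s * w \<noteq> 0"
    using P(2) w(1) subset_loc[OF P(1)] subringD(1)[OF subring]
    unfolding inverted_elements_def by auto
  define m where "m = nat (- v P (s * w))"
  have xm: "x ^ m \<in> inverted_elements R S"
    using \<open>inverse x \<in> S\<close> x subring_power[OF S(1)] subring_power[OF subring]
    unfolding inverted_elements_def by (simp add: power_inverse[symmetric])
  have "v P (s * w * x ^ m) = v P (s * w) + int m * v P x"
    using val_mult[OF P(1) sw] val_power[OF P(1) x(2)] x(2) by simp
  also have "\<dots> \<ge> 0"
  proof -
    have "int m * v P x \<ge> int m" using mult_left_mono[of 1 "v P x" "int m"] x(3) by simp
    then show ?thesis unfolding m_def by linarith
  qed
  finally have "s * w * x ^ m \<in> loc P" using mem_loc_iff_val[OF P(1)] sw x(2) by simp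
  moreover have "s * w * x ^ m \<in> loc Q" if "Q \<in> T" for Q
  proof -
    have Q: "ht1 Q" using insert that by auto
    have "x ^ m \<in> loc Q" using subset_loc[OF Q] subring_power[OF subring x(1)] by auto
    then show ?thesis using w(2) that subringD(5)[OF subring_loc[OF Q]] by blast
  qed
  moreover have "w * x ^ m \<in> inverted_elements R S"
    using mult_set_inverted_elements[OF subring S(1)] w(1) xm unfolding mult_set_def by blast
  ultimately show ?case by (auto simp: mult.assoc intro!: bexI[of _ "w * x ^ m"])
qed

theorem globally_perinormal_if_class_group_torsion:
  assumes tor: "class_group_torsion R"
  shows "globally_perinormal R"
  unfolding globally_perinormal_def
proof (intro allI impI)
  fix S assume "overring R S \<and> going_down R S"
  then have S: "subring S" "R \<subseteq> S" and gd: "going_down R S" unfolding overring_def by auto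
  define W where "W = inverted_elements R S"
  have "S \<subseteq> localization R W"
  proof
    fix s assume s: "s \<in> S"
    obtain w where w: "w \<in> W" "\<forall>P\<in>{P. ht1 P \<and> s \<notin> loc P}. s * w \<in> loc P"
      using exists_inverted_element_into_loc[OF tor S gd s finite_ht1_not_in_loc] unfolding W_def
      by blast
    have wR: "w \<in> R" "w \<noteq> 0" using w unfolding W_def inverted_elements_def by auto
    have "s * w \<in> R"
    proof (rule mem_if_in_all_loc)
      fix P assume P: "ht1 P"
      show "s * w \<in> loc P"
      proof (cases "s \<in> loc P")
        case True
        then show ?thesis using subset_loc[OF P] wR subringD(5)[OF subring_loc[OF P]] by blast
      next
        case False then show ?thesis using w P by auto
      qed
    qed
    moreover have "s = (s * w) * inverse w" using wR by simp
    ultimately show "s \<in> localization R W" unfolding localization_def using w by blast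
  qed
  then show "\<exists>W. mult_set R W \<and> S = localization R W"
    using localization_inverted_elements_subset[OF S] mult_set_inverted_elements[OF subring S(1)]
    unfolding W_def by blast
qed

end

section \<open>Globally perinormal Krull domains of dimension one\<close>

context krull_domain_of_field
begin

lemma exists_element_dominating_valuations:
  assumes P: "ht1 P" and G: "finite G" "G \<subseteq> {Q. ht1 Q \<and> Q \<noteq> P}"
  shows "\<exists>b\<in>R. b \<notin> P \<and> (\<forall>Q\<in>G. v Q b \<ge> k Q)"
  using G
proof (induction G rule: finite_induct)
  case empty then show ?case using subringD(2)[OF subring] ht1_one[OF P] by blast
next
  case (insert Q G)
  then obtain b where b: "b \<in> R" "b \<notin> P" "\<forall>Q\<in>G. v Q b \<ge> k Q" by auto
  have Q: "ht1 Q" "Q \<noteq> P" using insert by auto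
  then obtain c where c: "c \<in> Q" "c \<notin> P" using ht1_incomparable[OF P Q(1)] by blast
  have cR: "c \<in> R" and cz: "c \<noteq> 0" and bz: "b \<noteq> 0"
    using c b ht1_subset[OF Q(1)] ht1_zero[OF P] by auto
  define m where "m = nat (k Q)"
  have "c ^ m \<notin> P" using prime_ideal_powerD[OF ht1_prime[OF P] subring cR] c(2) by blast
  then have bc: "b * c ^ m \<in> R" "b * c ^ m \<notin> P"
    using prime_ideal_multD[OF ht1_prime[OF P] b(1) subring_power[OF subring cR]] b(1,2)
      subringD(5)[OF subring b(1) subring_power[OF subring cR]] by auto
  have v_bc: "v Q' (b * c ^ m) = v Q' b + int m * v Q' c" if "ht1 Q'" for Q'
    using val_mult[OF that bz] val_power[OF that cz] cz by simp
  have "v Q (b * c ^ m) \<ge> k Q"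
  proof -
    have "int m * v Q c \<ge> int m" using mult_left_mono[OF val_pos[OF Q(1) c(1) cz], of "int m"] by simp
    then show ?thesis using v_bc[OF Q(1)] val_nonneg[OF Q(1) b(1) bz] unfolding m_def by linarith
  qed
  moreover have "v Q' (b * c ^ m) \<ge> k Q'" if "Q' \<in> G" for Q'
  proof -
    have Q': "ht1 Q'" using that insert by auto
    then have "int m * v Q' c \<ge> 0" using val_nonneg[OF Q' cR cz] by simp
    then show ?thesis using v_bc[OF Q'] b(3) that by fastforce
  qed
  ultimately show ?case using bc by blast
qed

definition loc_except :: "'b set \<Rightarrow> 'b set" where
  "loc_except P = (\<Inter>Q\<in>{Q. ht1 Q \<and> Q \<noteq> P}. loc Q)"

lemma subring_loc_except: "subring (loc_except P)"
  unfolding loc_except_def using subring_loc by (intro subring_INT) blast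

lemma subset_loc_except: "R \<subseteq> loc_except P"
  unfolding loc_except_def using subset_loc by blast

text \<open>Take 0 \<noteq> a \<in> P and b \<notin> P dominating a at the finitely many other height one primes
  containing a; then b/a has a pole at P only.\<close>
lemma exists_element_with_pole_only_at:
  assumes P: "ht1 P"
  shows "\<exists>x. x \<noteq> 0 \<and> x \<in> loc_except P \<and> x \<notin> loc P"
proof -
  obtain a where a: "a \<in> P" "a \<noteq> 0" using ht1_nonzero[OF P] by blast
  have aR: "a \<in> R" using a ht1_subset[OF P] by auto
  define F where "F = {Q. ht1 Q \<and> a \<in> Q \<and> Q \<noteq> P}"
  have "finite F" unfolding F_def by (rule finite_subset[OF _ finite_ht1_containing[OF aR a(2)]]) auto
  then obtain b where b: "b \<in> R" "b \<notin> P" "\<forall>Q\<in>F. v Q b \<ge> v Q a"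
    using exists_element_dominating_valuations[OF P, of F "\<lambda>Q. v Q a"] unfolding F_def by blast
  have bz: "b \<noteq> 0" using b ht1_zero[OF P] by auto
  define x where "x = b * inverse a"
  have xz: "x \<noteq> 0" unfolding x_def using bz a by simp
  have vx: "v Q x = v Q b - v Q a" if "ht1 Q" for Q
    unfolding x_def using val_mult[OF that bz] val_inverse[OF that a(2)] a(2) by simp
  have "x \<in> loc Q" if Q: "ht1 Q" "Q \<noteq> P" for Q
  proof -
    have "v Q x \<ge> 0"
    proof (cases "a \<in> Q")
      case True then show ?thesis using b(3) vx[OF Q(1)] Q unfolding F_def by auto
    next
      case False then show ?thesis using val_zero[OF Q(1) aR False] val_nonneg[OF Q(1) b(1) bz] vx[OF Q(1)] by simp
    qed
    then show ?thesis using mem_loc_iff_val[OF Q(1) xz] by simp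
  qed
  then have "x \<in> loc_except P" unfolding loc_except_def by blast
  moreover have "v P x < 0" using vx[OF P] val_zero[OF P b(1,2)] val_pos[OF P a] by simp
  then have "x \<notin> loc P" using mem_loc_iff_val[OF P xz] by simp
  ultimately show ?thesis using xz by blast
qed

text \<open>A denominator w of an element with a pole only at P must lie in P, and w is a unit in
  every R_Q with Q \<noteq> P because 1/w \<in> R_W.\<close>
lemma prime_divisor_torsion_if_localization:
  assumes P: "ht1 P" and W: "mult_set R W" "loc_except P = localization R W"
  shows "\<exists>n>0. \<exists>w. w \<noteq> 0 \<and> principal_divisor R w = (\<lambda>Q. n * prime_divisor P Q)"
proof -
  obtain x where x: "x \<noteq> 0" "x \<in> loc_except P" "x \<notin> loc P"
    using exists_element_with_pole_only_at[OF P] by blast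
  then obtain a w where aw: "a \<in> R" "w \<in> W" "x = a * inverse w"
    using W(2) unfolding localization_def by auto
  have wR: "w \<in> R" "w \<noteq> 0" using aw W(1) unfolding mult_set_def by auto
  have wP: "w \<in> P" using x(3) aw wR unfolding mem_loc_iff by blast
  have "1 * inverse w \<in> loc_except P"
    using W(2) aw(2) subringD(2)[OF subring] unfolding localization_def by blast
  have vw: "v Q w = 0" if Q: "ht1 Q" "Q \<noteq> P" for Q
  proof -
    have "inverse w \<in> loc Q" using \<open>1 * inverse w \<in> loc_except P\<close> Q unfolding loc_except_def by auto
    then have "v Q (inverse w) \<ge> 0" using mem_loc_iff_val[OF Q(1)] wR(2) by simp
    then show ?thesis using val_inverse[OF Q(1) wR(2)] val_nonneg[OF Q(1) wR] by simp
  qed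
  have "principal_divisor R w = (\<lambda>Q. v P w * prime_divisor P Q)"
    unfolding principal_divisor_def prime_divisor_def using vw P by auto
  then show ?thesis using val_pos[OF P wP wR(2)] wR by (intro exI[of _ "v P w"]) auto
qed

lemma prime_divisor_torsion:
  assumes dim: "krull_dim_one R" and gp: "globally_perinormal R" and P: "ht1 P"
  shows "\<exists>n>0. \<exists>w. w \<noteq> 0 \<and> principal_divisor R w = (\<lambda>Q. n * prime_divisor P Q)"
proof -
  have "going_down R (loc_except P)"
    using going_down_if_dim_one[OF dim subring subring_loc_except] .
  then obtain W where "mult_set R W" "loc_except P = localization R W"
    using gp subring_loc_except subset_loc_except unfolding globally_perinormal_def overring_def
    by blast
  then show ?thesis using prime_divisor_torsion_if_localization[OF P] by blast
qed

lemma principal_divisor_mult: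
  "x \<noteq> 0 \<Longrightarrow> y \<noteq> 0 \<Longrightarrow>
    principal_divisor R (x * y) = (\<lambda>Q. principal_divisor R x Q + principal_divisor R y Q)"
  unfolding principal_divisor_def using val_mult by auto

lemma principal_divisor_power_int:
  "x \<noteq> 0 \<Longrightarrow> principal_divisor R (x powi k) = (\<lambda>Q. k * principal_divisor R x Q)"
  unfolding principal_divisor_def using val_power_int by auto

lemma principal_divisor_one: "principal_divisor R 1 = (\<lambda>Q. 0)"
  unfolding principal_divisor_def using val_one by auto

lemma principal_multiple_if_supported_in:
  assumes dim: "krull_dim_one R" and gp: "globally_perinormal R"
    and F: "finite F" "\<forall>Q\<in>F. ht1 Q" and D: "\<forall>Q. D Q \<noteq> 0 \<longrightarrow> Q \<in> F"
  shows "\<exists>n>0. \<exists>x. x \<noteq> 0 \<and> principal_divisor R x = (\<lambda>Q. n * D Q)"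
  using F D
proof (induction F arbitrary: D rule: finite_induct)
  case empty
  then have "principal_divisor R 1 = (\<lambda>Q. 1 * D Q)" using principal_divisor_one by auto
  then show ?case by (intro exI[of _ 1] conjI exI[of _ 1]) simp_all
next
  case (insert P F D)
  have "\<forall>Q\<in>F. ht1 Q" "\<forall>Q. (D(P := 0)) Q \<noteq> 0 \<longrightarrow> Q \<in> F" using insert.prems by auto
  then obtain n x where nx: "n > 0" "x \<noteq> 0" "principal_divisor R x = (\<lambda>Q. n * (D(P := 0)) Q)"
    using insert.IH by blast
  obtain np w where w: "np > 0" "w \<noteq> 0" "principal_divisor R w = (\<lambda>Q. np * prime_divisor P Q)"
    using prime_divisor_torsion[OF dim gp] insert.prems by blast
  define y where "y = x powi np * w powi (n * D P)"
  have nz: "x powi np \<noteq> 0" "w powi (n * D P) \<noteq> 0" using nx w by (simp_all add: power_int_not_zero)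
  have "principal_divisor R y Q = (np * n) * D Q" for Q
  proof -
    have "principal_divisor R y Q = np * (n * (D(P := 0)) Q) + (n * D P) * (np * prime_divisor P Q)"
      unfolding y_def principal_divisor_mult[OF nz] principal_divisor_power_int[OF nx(2)]
        principal_divisor_power_int[OF w(2)] nx(3) w(3) by simp
    also have "\<dots> = (np * n) * D Q" unfolding prime_divisor_def by (simp add: algebra_simps)
    finally show ?thesis .
  qed
  then have "principal_divisor R y = (\<lambda>Q. (np * n) * D Q)" by (rule ext)
  moreover have "y \<noteq> 0" unfolding y_def using nz by simp
  moreover have "np * n > 0" using nx w by simp
  ultimately show ?case by blast
qed

theorem class_group_torsion_if_dim_one_globally_perinormal:
  assumes dim: "krull_dim_one R" and gp: "globally_perinormal R"
  shows "class_group_torsion R"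
  unfolding class_group_torsion_def
proof
  fix D assume "D \<in> divisors R"
  then have "finite {Q. D Q \<noteq> 0}" "\<forall>Q\<in>{Q. D Q \<noteq> 0}. ht1 Q" unfolding divisors_def by auto
  moreover have "\<forall>Q. D Q \<noteq> 0 \<longrightarrow> Q \<in> {Q. D Q \<noteq> 0}" by simp
  ultimately obtain n x where n: "n > 0" and x: "x \<noteq> 0" "principal_divisor R x = (\<lambda>Q. n * D Q)"
    using principal_multiple_if_supported_in[OF dim gp] by blast
  have "(\<lambda>Q. n * D Q) \<in> principal_divisors R"
    unfolding principal_divisors_def mem_Collect_eq using x by (intro exI[of _ x]) simp
  then show "\<exists>n>0. (\<lambda>P. n * D P) \<in> principal_divisors R" using n by blast
qed

end

theorem theorem6p4:
  assumes "krull_domain (dom_in_frac :: ('a::idom) fract set)"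
  shows "(class_group_torsion (dom_in_frac :: 'a fract set)
            \<longrightarrow> globally_perinormal (dom_in_frac :: 'a fract set))
       \<and> (krull_dim_one (dom_in_frac :: 'a fract set)
            \<and> globally_perinormal (dom_in_frac :: 'a fract set)
            \<longrightarrow> class_group_torsion (dom_in_frac :: 'a fract set))"
proof -
  interpret krull_domain_of_field "dom_in_frac :: 'a fract set"
    using assms has_fraction_field_dom_in_frac by unfold_locales
  show ?thesis
    using globally_perinormal_if_class_group_torsion
      class_group_torsion_if_dim_one_globally_perinormal by blast
qed

end
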